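(* Let $X$ be a finite positive definite metric space and let $x\in X$. Suppose there exists a probability measure $\nu$ on $X$ with $\nu(\{x\})=0$ such that $$\sum_{z\in X}e^{-d(y,z)}\nu(z)\le e^{-d(x,y)}\qquad\text{for all }y\in X.$$ Then $x$ does not belong to the support of the diversity-maximizing measure of $X$.
   Context: A finite metric space $(X,d)$ is positive definite if the matrix $Z=(e^{-d(x,y)})_{x,y\in X}$ is positive definite. The diversity-maximizing measure is the (unique, by positive definiteness) probability measure $\mu$ on $X$ minimizing $\sum_{x,y}e^{-d(x,y)}\mu(x)\mu(y)$; its support is $\{y:\mu(y)>0\}$. *)

theory Defs
  imports Complex_Main
begin

definition finite_metric_space :: "'a set \<Rightarrow> ('a \<Rightarrow> 'a \<Rightarrow> real) \<Rightarrow> bool" where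
  "finite_metric_space X d \<longleftrightarrow> finite X \<and>
     (\<forall>x\<in>X. \<forall>y\<in>X. d x y \<ge> 0 \<and> (d x y = 0 \<longleftrightarrow> x = y) \<and> d x y = d y x) \<and>
     (\<forall>x\<in>X. \<forall>y\<in>X. \<forall>z\<in>X. d x z \<le> d x y + d y z)"

definition positive_definite_space :: "'a set \<Rightarrow> ('a \<Rightarrow> 'a \<Rightarrow> real) \<Rightarrow> bool" where
  "positive_definite_space X d \<longleftrightarrow>
     (\<forall>w::'a \<Rightarrow> real. (\<exists>y\<in>X. w y \<noteq> 0) \<longrightarrow>
        (\<Sum>x\<in>X. \<Sum>y\<in>X. w x * exp (- d x y) * w y) > 0)"

definition prob_measure_on :: "'a set \<Rightarrow> ('a \<Rightarrow> real) \<Rightarrow> bool" where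
  "prob_measure_on X \<mu> \<longleftrightarrow> (\<forall>y\<in>X. \<mu> y \<ge> 0) \<and> (\<Sum>y\<in>X. \<mu> y) = 1"

definition diversity_form :: "'a set \<Rightarrow> ('a \<Rightarrow> 'a \<Rightarrow> real) \<Rightarrow> ('a \<Rightarrow> real) \<Rightarrow> real" where
  "diversity_form X d \<mu> = (\<Sum>x\<in>X. \<Sum>y\<in>X. exp (- d x y) * \<mu> x * \<mu> y)"

text \<open>mu is the diversity-maximizing measure: a probability measure minimizing the form
  (unique when the space is positive definite).\<close>
definition diversity_maximizing :: "'a set \<Rightarrow> ('a \<Rightarrow> 'a \<Rightarrow> real) \<Rightarrow> ('a \<Rightarrow> real) \<Rightarrow> bool" where
  "diversity_maximizing X d \<mu> \<longleftrightarrow> prob_measure_on X \<mu> \<and>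
     (\<forall>\<nu>. prob_measure_on X \<nu> \<longrightarrow> diversity_form X d \<mu> \<le> diversity_form X d \<nu>)"

definition support_on :: "'a set \<Rightarrow> ('a \<Rightarrow> real) \<Rightarrow> 'a set" where
  "support_on X \<mu> = {y\<in>X. \<mu> y > 0}"

end

theory Submission
  imports Defs
begin

text \<open>Put \<open>w = \<nu> - \<delta>\<^sub>x\<close>; the hypothesis says that \<open>Z w \<le> 0\<close> pointwise. If \<open>m = \<mu>(x) > 0\<close>,
  then \<open>\<mu>' = \<mu> + m w\<close> is again a probability measure (the mass of \<open>\<mu>\<close> at \<open>x\<close> is spread out
  according to \<open>\<nu>\<close>), and for the symmetric bilinear form \<open>B(f, g) = f\<^sup>T Z g\<close>
  \<open>B(\<mu>', \<mu>') = B(\<mu>, \<mu>) + 2 m B(\<mu>', w) - m\<^sup>2 B(w, w)\<close>.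
  Here \<open>B(\<mu>', w) \<le> 0\<close> because \<open>\<mu>' \<ge> 0\<close> and \<open>Z w \<le> 0\<close>, while \<open>B(w, w) > 0\<close> by positive
  definiteness, so \<open>\<mu>'\<close> has strictly smaller diversity form than \<open>\<mu>\<close>.\<close>

definition similarity_form ::
    "'a set \<Rightarrow> ('a \<Rightarrow> 'a \<Rightarrow> real) \<Rightarrow> ('a \<Rightarrow> real) \<Rightarrow> ('a \<Rightarrow> real) \<Rightarrow> real" where
  "similarity_form X d f g = (\<Sum>y\<in>X. \<Sum>z\<in>X. exp (- d y z) * f y * g z)"

lemma diversity_form_eq_similarity_form:
  "diversity_form X d \<mu> = similarity_form X d \<mu> \<mu>"
  unfolding diversity_form_def similarity_form_def ..

lemma similarity_form_add_scaled_left: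
  "similarity_form X d (\<lambda>y. f y + c * g y) h = similarity_form X d f h + c * similarity_form X d g h"
  unfolding similarity_form_def by (simp add: algebra_simps sum.distrib sum_distrib_left)

lemma similarity_form_add_scaled_right:
  "similarity_form X d h (\<lambda>y. f y + c * g y) = similarity_form X d h f + c * similarity_form X d h g"
  unfolding similarity_form_def by (simp add: algebra_simps sum.distrib sum_distrib_left)

lemma similarity_form_commute:
  assumes "\<forall>y\<in>X. \<forall>z\<in>X. d y z = d z y"
  shows "similarity_form X d f g = similarity_form X d g f"
  unfolding similarity_form_def
  by (subst sum.swap) (use assms in \<open>auto intro!: sum.cong simp: mult_ac\<close>)

lemma similarity_form_shift_self:
  assumes "\<forall>y\<in>X. \<forall>z\<in>X. d y z = d z y"
  shows "similarity_form X d (\<lambda>y. f y + c * g y) (\<lambda>y. f y + c * g y) =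
    similarity_form X d f f + 2 * c * similarity_form X d (\<lambda>y. f y + c * g y) g
      - c\<^sup>2 * similarity_form X d g g"
  using similarity_form_commute[OF assms, of g f]
  by (simp add: similarity_form_add_scaled_left similarity_form_add_scaled_right
      algebra_simps power2_eq_square)

lemma similarity_form_nonpos:
  assumes "\<forall>y\<in>X. f y \<ge> 0"
    and "\<forall>y\<in>X. (\<Sum>z\<in>X. exp (- d y z) * g z) \<le> 0"
  shows "similarity_form X d f g \<le> 0"
proof -
  have "similarity_form X d f g = (\<Sum>y\<in>X. f y * (\<Sum>z\<in>X. exp (- d y z) * g z))"
    unfolding similarity_form_def by (simp add: sum_distrib_left mult_ac)
  also have "\<dots> \<le> 0"
    using assms by (intro sum_nonpos) (simp add: mult_nonneg_nonpos)
  finally show ?thesis .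
qed

lemma similarity_form_pos:
  assumes "positive_definite_space X d" and "y \<in> X" and "g y \<noteq> 0"
  shows "similarity_form X d g g > 0"
  using assms unfolding positive_definite_space_def similarity_form_def
  by (auto simp: mult_ac)

lemma prob_measure_on_move_mass:
  assumes "finite X" and "x \<in> X"
    and "prob_measure_on X \<mu>" and "prob_measure_on X \<nu>" and "\<nu> x = 0"
  shows "prob_measure_on X (\<lambda>y. \<mu> y + \<mu> x * (\<nu> y - (if y = x then 1 else 0)))"
proof -
  have "0 \<le> \<mu> y + \<mu> x * (\<nu> y - (if y = x then 1 else 0))" if "y \<in> X" for y
    using assms(2-5) that unfolding prob_measure_on_def by (cases "y = x") auto
  moreover have "(\<Sum>y\<in>X. \<nu> y - (if y = x then 1 else 0)) = 0"
    using assms(1,2,4) unfolding prob_measure_on_def by (simp add: sum_subtractf)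
  ultimately show ?thesis
    using assms(3) unfolding prob_measure_on_def by (simp add: sum.distrib flip: sum_distrib_left)
qed

theorem proposition4p4:
  fixes X :: "'a set" and d :: "'a \<Rightarrow> 'a \<Rightarrow> real" and x :: 'a
    and \<nu> \<mu> :: "'a \<Rightarrow> real"
  assumes "finite_metric_space X d"
    and "positive_definite_space X d"
    and "x \<in> X"
    and "prob_measure_on X \<nu>"
    and "\<nu> x = 0"
    and "\<forall>y\<in>X. (\<Sum>z\<in>X. exp (- d y z) * \<nu> z) \<le> exp (- d x y)"
    and "diversity_maximizing X d \<mu>"
  shows "x \<notin> support_on X \<mu>"
proof
  assume "x \<in> support_on X \<mu>"
  then have m_pos: "\<mu> x > 0" by (simp add: support_on_def)
  have fin: "finite X" and sym: "\<forall>y\<in>X. \<forall>z\<in>X. d y z = d z y"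
    using assms(1) unfolding finite_metric_space_def by auto
  have \<mu>_prob: "prob_measure_on X \<mu>"
    using assms(7) unfolding diversity_maximizing_def by simp
  define w where "w y = \<nu> y - (if y = x then 1 else 0)" for y
  define \<mu>' where "\<mu>' = (\<lambda>y. \<mu> y + \<mu> x * w y)"
  have \<mu>'_prob: "prob_measure_on X \<mu>'"
    unfolding \<mu>'_def w_def using prob_measure_on_move_mass[OF fin assms(3) \<mu>_prob assms(4,5)] .
  have "(\<Sum>z\<in>X. exp (- d y z) * w z) = (\<Sum>z\<in>X. exp (- d y z) * \<nu> z) - exp (- d x y)"
    if "y \<in> X" for y
  proof -
    have "(\<Sum>z\<in>X. exp (- d y z) * (if z = x then 1 else 0)) = exp (- d y x)"
      using fin assms(3) by (simp add: if_distrib sum.delta cong: if_cong)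
    then show ?thesis
      using sym that assms(3) by (simp add: w_def right_diff_distrib sum_subtractf)
  qed
  then have "\<forall>y\<in>X. (\<Sum>z\<in>X. exp (- d y z) * w z) \<le> 0"
    using assms(6) by simp
  then have "\<mu> x * similarity_form X d \<mu>' w \<le> 0"
    using \<mu>'_prob m_pos
    by (intro mult_nonneg_nonpos similarity_form_nonpos) (auto simp: prob_measure_on_def)
  moreover have "(\<mu> x)\<^sup>2 * similarity_form X d w w > 0"
    using similarity_form_pos[OF assms(2,3)] assms(5) m_pos by (simp add: w_def)
  ultimately have "diversity_form X d \<mu>' < diversity_form X d \<mu>"
    using similarity_form_shift_self[OF sym, of \<mu> "\<mu> x" w, folded \<mu>'_def]
    by (simp add: diversity_form_eq_similarity_form)
  with assms(7) \<mu>'_prob show False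
    unfolding diversity_maximizing_def by (meson not_le)
qed

end
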